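(* Let $\kappa_{\mathrm{even}}$ denote the growth rate of the even model and $\kappa_{p\text{-}i}$ the growth rate of the $p$-$i$ model on the square lattice, as defined in the context. Then $\kappa_{\mathrm{even}}=\kappa_{p\text{-}i}$.
   Context: Work on the finite square lattice $[1,N]^2\subset\mathbb{Z}^2$, whose $N^2$ vertices carry spins $\oplus$ or $\ominus$. A spin configuration satisfies the even constraint if for any two $\ominus$ spins lying on a common horizontal or vertical line with no other $\ominus$ spin between them, the number of $\oplus$ spins between them is even. Let $Z^{\mathrm{even}}_N$ be the number of such configurations on $[1,N]^2$. The $p$-$i$ model places states on the bonds of $[1,N]^2$, including boundary bonds (so every vertex has four incident bonds), each state being $p$ or $i$. A labelling is valid if at every vertex: the number of incident bonds labelled $i$ is $0$ or $2$, and the two horizontal incident bonds are not both $i$, and the two vertical incident bonds are not both $i$ (i.e. no two adjacent $i$ states along any horizontal or vertical line). Let $Z^{p\text{-}i}_N$ be the number of valid labellings. (Intuitively, a bond's state records the parity, $p$ = even, $i$ = odd, of the number of $\oplus$ spins between it and the nearest $\ominus$ to its west/north.) The growth rate of a model is $\kappa=\lim_{N\to\infty} Z_N^{1/N^2}$ (these limits are taken to exist). *)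

theory Defs
  imports Complex_Main
begin

text \<open>Vertices of the lattice [1,N]^2 are pairs (i,j) with 1 \<le> i,j \<le> N;
  i indexes the row (horizontal line), j the column (vertical line).\<close>

definition grid :: "nat \<Rightarrow> (nat \<times> nat) set" where
  "grid N = {1..N} \<times> {1..N}"

text \<open>A spin configuration is given by the set S of vertices carrying a minus spin;
  all other vertices of the grid carry a plus spin.\<close>

definition even_constraint :: "nat \<Rightarrow> (nat \<times> nat) set \<Rightarrow> bool" where
  "even_constraint N S \<longleftrightarrow>
     (\<forall>i j j'. (i, j) \<in> S \<and> (i, j') \<in> S \<and> j < j' \<and>
         (\<forall>k. j < k \<and> k < j' \<longrightarrow> (i, k) \<notin> S)
       \<longrightarrow> even (card {k. j < k \<and> k < j' \<and> (i, k) \<in> grid N \<and> (i, k) \<notin> S})) \<and>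
     (\<forall>j i i'. (i, j) \<in> S \<and> (i', j) \<in> S \<and> i < i' \<and>
         (\<forall>k. i < k \<and> k < i' \<longrightarrow> (k, j) \<notin> S)
       \<longrightarrow> even (card {k. i < k \<and> k < i' \<and> (k, j) \<in> grid N \<and> (k, j) \<notin> S}))"

definition Z_even :: "nat \<Rightarrow> nat" where
  "Z_even N = card {S. S \<subseteq> grid N \<and> even_constraint N S}"

text \<open>Horizontal bond (i,j), 1 \<le> i \<le> N, 0 \<le> j \<le> N, joins (i,j) and (i,j+1)
  (boundary bonds for j = 0 and j = N); vertex (i,j) has west bond (i,j-1) and east bond (i,j).
  Vertical bond (i,j), 0 \<le> i \<le> N, 1 \<le> j \<le> N, joins (i,j) and (i+1,j);
  vertex (i,j) has north bond (i-1,j) and south bond (i,j).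
  A labelling is given by the sets H, V of horizontal / vertical bonds in state i.\<close>

definition hbonds :: "nat \<Rightarrow> (nat \<times> nat) set" where
  "hbonds N = {1..N} \<times> {0..N}"

definition vbonds :: "nat \<Rightarrow> (nat \<times> nat) set" where
  "vbonds N = {0..N} \<times> {1..N}"

definition pi_valid :: "nat \<Rightarrow> (nat \<times> nat) set \<Rightarrow> (nat \<times> nat) set \<Rightarrow> bool" where
  "pi_valid N H V \<longleftrightarrow>
     (\<forall>i j. (i, j) \<in> grid N \<longrightarrow>
        (let w = (i, j - 1) \<in> H; e = (i, j) \<in> H;
             n = (i - 1, j) \<in> V; s = (i, j) \<in> V;
             c = card ({b. b = 0 \<and> w} \<union> {b. b = 1 \<and> e} \<union> {b. b = 2 \<and> n} \<union> {b. b = (3::nat) \<and> s})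
         in (c = 0 \<or> c = 2) \<and> \<not> (w \<and> e) \<and> \<not> (n \<and> s)))"

definition Z_pi :: "nat \<Rightarrow> nat" where
  "Z_pi N = card {(H, V). H \<subseteq> hbonds N \<and> V \<subseteq> vbonds N \<and> pi_valid N H V}"

definition growth_seq :: "(nat \<Rightarrow> nat) \<Rightarrow> nat \<Rightarrow> real" where
  "growth_seq Z N = real (Z N) powr (1 / real (N ^ 2))"

end

theory Submission
  imports Defs
begin

text \<open>Along a single line, the bond states of a valid p-i labelling flip at every plus site and
  are p on both sides of every minus site; such states exist exactly when consecutive minus
  sites enclose an even number of plus sites, and they are then fixed by the state of the first
  bond. The minus sites of a valid labelling (the vertices without incident i-bonds) therefore
  form an even configuration, every even configuration arises this way, and it arises from at
  most 4^N labellings, one for each choice of states of the boundary bonds on the west and north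
  edges. Hence Z_even N \<le> Z_pi N \<le> 4^N Z_even N, and the factor 4^N disappears under the
  N^2-th root.\<close>

definition even_gaps :: "nat set \<Rightarrow> bool" where
  "even_gaps P \<longleftrightarrow>
     (\<forall>j\<in>P. \<forall>j'\<in>P. j < j' \<longrightarrow> {j<..<j'} \<inter> P = {} \<longrightarrow> even (j' - j - 1))"

text \<open>One line of N sites with minus sites P; bond k (0 \<le> k \<le> N) joins sites k and k+1,
  and B is the set of bonds in state i.\<close>

definition alternating_line :: "nat \<Rightarrow> nat set \<Rightarrow> nat set \<Rightarrow> bool" where
  "alternating_line N P B \<longleftrightarrow>
     (\<forall>k\<in>{1..N}. if k \<in> P then k - 1 \<notin> B \<and> k \<notin> B else (k \<in> B \<longleftrightarrow> k - 1 \<notin> B))"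

lemma alternating_line_minus:
  "alternating_line N P B \<Longrightarrow> k \<in> {1..N} \<Longrightarrow> k \<in> P \<Longrightarrow> k - 1 \<notin> B \<and> k \<notin> B"
  unfolding alternating_line_def by (auto dest!: bspec[where x = k])

lemma alternating_line_plus:
  "alternating_line N P B \<Longrightarrow> k \<in> {1..N} \<Longrightarrow> k \<notin> P \<Longrightarrow> k \<in> B \<longleftrightarrow> k - 1 \<notin> B"
  unfolding alternating_line_def by (auto dest!: bspec[where x = k])

lemma alternates_parity:
  fixes j k :: nat
  assumes "j \<le> k" "\<forall>m\<in>{j<..k}. m \<in> B \<longleftrightarrow> m - 1 \<notin> B"
  shows "k \<in> B \<longleftrightarrow> (j \<in> B \<longleftrightarrow> even (k - j))"
  using assms
proof (induction k rule: dec_induct)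
  case base then show ?case by simp
next
  case (step k)
  then have "Suc k \<in> B \<longleftrightarrow> k \<notin> B" by auto
  with step show ?case by (simp add: Suc_diff_le)
qed

lemma alternating_line_even_gaps:
  assumes alt: "alternating_line N P B" and P: "P \<subseteq> {1..N}"
  shows "even_gaps P"
  unfolding even_gaps_def
proof (intro ballI impI)
  fix j j' assume j: "j \<in> P" "j' \<in> P" "j < j'" "{j<..<j'} \<inter> P = {}"
  have "\<forall>m\<in>{j<..j' - 1}. m \<in> B \<longleftrightarrow> m - 1 \<notin> B"
  proof
    fix m assume "m \<in> {j<..j' - 1}"
    then have "m \<in> {1..N}" "m \<notin> P" using j P by (auto simp: disjoint_iff)
    then show "m \<in> B \<longleftrightarrow> m - 1 \<notin> B" using alternating_line_plus[OF alt] by blast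
  qed
  then have "j' - 1 \<in> B \<longleftrightarrow> (j \<in> B \<longleftrightarrow> even (j' - 1 - j))"
    using j(3) by (intro alternates_parity) auto
  moreover have "j \<notin> B" "j' - 1 \<notin> B"
    using alternating_line_minus[OF alt] j(1,2) P by blast+
  ultimately show "even (j' - j - 1)" by (simp add: diff_commute)
qed

lemma alternating_line_unique:
  assumes alt: "alternating_line N P B" "alternating_line N P B'"
    and "B \<subseteq> {0..N}" "B' \<subseteq> {0..N}" "0 \<in> B \<longleftrightarrow> 0 \<in> B'"
  shows "B = B'"
proof -
  have "k \<in> B \<longleftrightarrow> k \<in> B'" if "k \<le> N" for k
    using that
  proof (induction k)
    case 0 show ?case by (fact assms(5))
  next
    case (Suc k)
    then have IH: "k \<in> B \<longleftrightarrow> k \<in> B'" and k: "Suc k \<in> {1..N}" by auto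
    show ?case
      using IH alternating_line_minus[OF _ k] alternating_line_plus[OF _ k] alt by force
  qed
  then show ?thesis using assms(3,4) by auto
qed

fun flip_bonds :: "nat set \<Rightarrow> bool \<Rightarrow> nat \<Rightarrow> bool" where
  "flip_bonds P b 0 = b"
| "flip_bonds P b (Suc k) = (Suc k \<notin> P \<and> \<not> flip_bonds P b k)"

text \<open>The initial state makes the bond just before the first minus site p; the even gaps then
  propagate this to the bond before every later minus site.\<close>

lemma flip_bonds_before_minus:
  assumes gaps: "even_gaps P" and P: "P \<subseteq> {1..N}" and k: "k \<in> P"
  shows "\<not> flip_bonds P (P \<noteq> {} \<and> odd (Min P - 1)) (k - 1)"
proof -
  define b where "b = (P \<noteq> {} \<and> odd (Min P - 1))"
  define B where "B = Collect (flip_bonds P b)"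
  have flip: "\<forall>m\<in>{j<..k'}. m \<in> B \<longleftrightarrow> m - 1 \<notin> B" if "{j<..k'} \<inter> P = {}" for j k'
  proof
    fix m assume m: "m \<in> {j<..k'}"
    then obtain m' where "m = Suc m'" by (cases m) auto
    with m that show "m \<in> B \<longleftrightarrow> m - 1 \<notin> B" by (auto simp: B_def)
  qed
  have "k - 1 \<notin> B"
  proof (cases "\<exists>j\<in>P. j < k")
    case True
    define j where "j = Max {j \<in> P. j < k}"
    have fin: "finite {j \<in> P. j < k}" by simp
    have "j \<in> {j \<in> P. j < k}" unfolding j_def using True by (intro Max_in) auto
    then have j: "j \<in> P" "j < k" by auto
    have none: "{j<..<k} \<inter> P = {}"
      using Max_ge[OF fin] unfolding j_def by fastforce
    have "k - 1 \<in> B \<longleftrightarrow> (j \<in> B \<longleftrightarrow> even (k - 1 - j))"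
      using j none by (intro alternates_parity flip) (auto simp: disjoint_iff)
    moreover have "j \<notin> B" using j P by (cases j) (auto simp: B_def)
    moreover have "even (k - j - 1)" using gaps j k none unfolding even_gaps_def by blast
    ultimately show ?thesis by (simp add: diff_commute)
  next
    case False
    have k1: "k \<in> {1..N}" using k P by auto
    then have "Min P = k" using k False finite_subset[OF P] by (intro Min_eqI) auto
    then have "b = odd (k - 1)" using k unfolding b_def by auto
    moreover have "{0<..k - 1} \<inter> P = {}" using False k1 by auto
    then have "k - 1 \<in> B \<longleftrightarrow> (0 \<in> B \<longleftrightarrow> even (k - 1 - 0))"
      using k1 by (intro alternates_parity flip) auto
    ultimately show ?thesis by (simp add: B_def)
  qed
  then show ?thesis by (simp add: B_def b_def)
qed

lemma even_gaps_ex_alternating_line: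
  assumes gaps: "even_gaps P" and P: "P \<subseteq> {1..N}"
  shows "\<exists>B \<subseteq> {0..N}. alternating_line N P B"
proof -
  let ?B = "{k \<in> {0..N}. flip_bonds P (P \<noteq> {} \<and> odd (Min P - 1)) k}"
  have "alternating_line N P ?B"
    unfolding alternating_line_def
  proof
    fix k assume k: "k \<in> {1..N}"
    then obtain k' where k': "k = Suc k'" by (cases k) auto
    show "if k \<in> P then k - 1 \<notin> ?B \<and> k \<notin> ?B else (k \<in> ?B \<longleftrightarrow> k - 1 \<notin> ?B)"
      using k flip_bonds_before_minus[OF gaps P, of k] unfolding k' by simp
  qed
  then show ?thesis by (intro exI[of _ ?B]) auto
qed

definition row :: "(nat \<times> nat) set \<Rightarrow> nat \<Rightarrow> nat set" where
  "row X i = {k. (i, k) \<in> X}"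

definition col :: "(nat \<times> nat) set \<Rightarrow> nat \<Rightarrow> nat set" where
  "col X j = {k. (k, j) \<in> X}"

lemma row_grid_subset: "S \<subseteq> grid N \<Longrightarrow> row S i \<subseteq> {1..N}"
  by (auto simp: row_def grid_def)

lemma col_grid_subset: "S \<subseteq> grid N \<Longrightarrow> col S j \<subseteq> {1..N}"
  by (auto simp: col_def grid_def)

lemma even_constraint_iff_lines:
  assumes S: "S \<subseteq> grid N"
  shows "even_constraint N S \<longleftrightarrow> (\<forall>i. even_gaps (row S i)) \<and> (\<forall>j. even_gaps (col S j))"
proof -
  have row_gap: "card {k. j < k \<and> k < j' \<and> (i, k) \<in> grid N \<and> (i, k) \<notin> S} = j' - j - 1"
    if "(i, j) \<in> S" "(i, j') \<in> S" "\<forall>k. j < k \<and> k < j' \<longrightarrow> (i, k) \<notin> S" for i j j'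
  proof -
    have "i \<in> {1..N}" "j \<ge> 1" "j' \<le> N" using that S by (auto simp: grid_def)
    then have "{k. j < k \<and> k < j' \<and> (i, k) \<in> grid N \<and> (i, k) \<notin> S} = {j<..<j'}"
      using that(3) by (auto simp: grid_def)
    then show ?thesis by simp
  qed
  have col_gap: "card {k. i < k \<and> k < i' \<and> (k, j) \<in> grid N \<and> (k, j) \<notin> S} = i' - i - 1"
    if "(i, j) \<in> S" "(i', j) \<in> S" "\<forall>k. i < k \<and> k < i' \<longrightarrow> (k, j) \<notin> S" for i i' j
  proof -
    have "j \<in> {1..N}" "i \<ge> 1" "i' \<le> N" using that S by (auto simp: grid_def)
    then have "{k. i < k \<and> k < i' \<and> (k, j) \<in> grid N \<and> (k, j) \<notin> S} = {i<..<i'}"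
      using that(3) by (auto simp: grid_def)
    then show ?thesis by simp
  qed
  have row_gaps: "even_gaps (row S i) \<longleftrightarrow> (\<forall>j j'. (i, j) \<in> S \<and> (i, j') \<in> S \<and> j < j' \<and>
      (\<forall>k. j < k \<and> k < j' \<longrightarrow> (i, k) \<notin> S) \<longrightarrow> even (j' - j - 1))" for i
    by (auto simp: even_gaps_def row_def disjoint_iff)
  have col_gaps: "even_gaps (col S j) \<longleftrightarrow> (\<forall>i i'. (i, j) \<in> S \<and> (i', j) \<in> S \<and> i < i' \<and>
      (\<forall>k. i < k \<and> k < i' \<longrightarrow> (k, j) \<notin> S) \<longrightarrow> even (i' - i - 1))" for j
    by (auto simp: even_gaps_def col_def disjoint_iff)
  show ?thesis
    unfolding even_constraint_def row_gaps col_gaps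
    by (simp add: row_gap col_gap cong: imp_cong)
qed

lemma pi_valid_iff:
  "pi_valid N H V \<longleftrightarrow> (\<forall>(i, j) \<in> grid N.
     ((i, j - 1) \<notin> H \<and> (i, j) \<notin> H \<and> (i - 1, j) \<notin> V \<and> (i, j) \<notin> V) \<or>
     (((i, j) \<in> H \<longleftrightarrow> (i, j - 1) \<notin> H) \<and> ((i, j) \<in> V \<longleftrightarrow> (i - 1, j) \<notin> V)))"
proof -
  have local: "(let c = card ({b. b = 0 \<and> w} \<union> {b. b = 1 \<and> e} \<union> {b. b = 2 \<and> n} \<union> {b. b = (3::nat) \<and> s})
        in (c = 0 \<or> c = 2) \<and> \<not> (w \<and> e) \<and> \<not> (n \<and> s)) \<longleftrightarrow>
      (\<not> w \<and> \<not> e \<and> \<not> n \<and> \<not> s) \<or> ((e \<longleftrightarrow> \<not> w) \<and> (s \<longleftrightarrow> \<not> n))" for w e n s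
    by (cases w; cases e; cases n; cases s) (simp_all add: Collect_conv_if card_insert_if)
  show ?thesis unfolding pi_valid_def local by (auto simp: Let_def)
qed

text \<open>For a valid labelling these are exactly the vertices with no incident bond in state i.\<close>

definition minus_sites :: "nat \<Rightarrow> (nat \<times> nat) set \<Rightarrow> (nat \<times> nat) set" where
  "minus_sites N H = {(i, j) \<in> grid N. (i, j - 1) \<notin> H \<and> (i, j) \<notin> H}"

definition lines_alternate ::
    "nat \<Rightarrow> (nat \<times> nat) set \<Rightarrow> (nat \<times> nat) set \<Rightarrow> (nat \<times> nat) set \<Rightarrow> bool" where
  "lines_alternate N S H V \<longleftrightarrow>
     (\<forall>i\<in>{1..N}. alternating_line N (row S i) (row H i)) \<and>
     (\<forall>j\<in>{1..N}. alternating_line N (col S j) (col V j))"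

lemma lines_alternate_pi_valid:
  assumes "lines_alternate N S H V"
  shows "pi_valid N H V"
proof -
  have "((i, j - 1) \<notin> H \<and> (i, j) \<notin> H \<and> (i - 1, j) \<notin> V \<and> (i, j) \<notin> V) \<or>
     (((i, j) \<in> H \<longleftrightarrow> (i, j - 1) \<notin> H) \<and> ((i, j) \<in> V \<longleftrightarrow> (i - 1, j) \<notin> V))"
    if "(i, j) \<in> grid N" for i j
  proof -
    from that have i: "i \<in> {1..N}" and j: "j \<in> {1..N}" by (auto simp: grid_def)
    have hor: "alternating_line N (row S i) (row H i)"
      and ver: "alternating_line N (col S j) (col V j)"
      using assms i j unfolding lines_alternate_def by auto
    show ?thesis
      using alternating_line_minus[OF hor j] alternating_line_plus[OF hor j]
        alternating_line_minus[OF ver i] alternating_line_plus[OF ver i]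
      by (cases "(i, j) \<in> S") (auto simp: row_def col_def)
  qed
  then show ?thesis unfolding pi_valid_iff by blast
qed

lemma pi_valid_lines_alternate:
  assumes "pi_valid N H V"
  shows "lines_alternate N (minus_sites N H) H V"
  unfolding lines_alternate_def alternating_line_def
proof (intro conjI ballI)
  fix i k assume i: "i \<in> {1..N}" and k: "k \<in> {1..N}"
  then have ik: "(i, k) \<in> grid N" and ki: "(k, i) \<in> grid N" by (auto simp: grid_def)
  show "if k \<in> row (minus_sites N H) i then k - 1 \<notin> row H i \<and> k \<notin> row H i
        else (k \<in> row H i \<longleftrightarrow> k - 1 \<notin> row H i)"
    using assms ik unfolding pi_valid_iff by (auto simp: row_def minus_sites_def)
  show "if k \<in> col (minus_sites N H) i then k - 1 \<notin> col V i \<and> k \<notin> col V i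
        else (k \<in> col V i \<longleftrightarrow> k - 1 \<notin> col V i)"
    using assms ki unfolding pi_valid_iff by (auto simp: col_def minus_sites_def)
qed

lemma lines_alternate_minus_sites:
  assumes "lines_alternate N S H V" "S \<subseteq> grid N"
  shows "minus_sites N H = S"
proof (rule set_eqI, clarify)
  fix i j
  show "(i, j) \<in> minus_sites N H \<longleftrightarrow> (i, j) \<in> S"
  proof (cases "(i, j) \<in> grid N")
    case True
    then have i: "i \<in> {1..N}" and j: "j \<in> {1..N}" by (auto simp: grid_def)
    then have hor: "alternating_line N (row S i) (row H i)"
      using assms(1) unfolding lines_alternate_def by blast
    show ?thesis
      using True alternating_line_minus[OF hor j] alternating_line_plus[OF hor j]
      by (auto simp: minus_sites_def row_def)
  next
    case False
    then show ?thesis using assms(2) by (auto simp: minus_sites_def)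
  qed
qed

lemma minus_sites_subset: "minus_sites N H \<subseteq> grid N"
  by (auto simp: minus_sites_def)

lemma pi_valid_even_constraint:
  assumes "pi_valid N H V"
  shows "even_constraint N (minus_sites N H)"
proof -
  let ?S = "minus_sites N H"
  have alt: "lines_alternate N ?S H V" using pi_valid_lines_alternate[OF assms] .
  have "even_gaps (row ?S i)" for i
  proof (cases "i \<in> {1..N}")
    case True
    then show ?thesis using alt
      by (intro alternating_line_even_gaps[OF _ row_grid_subset[OF minus_sites_subset]])
         (auto simp: lines_alternate_def)
  next
    case False
    then have "row ?S i = {}" by (auto simp: row_def minus_sites_def grid_def)
    then show ?thesis by (simp add: even_gaps_def)
  qed
  moreover have "even_gaps (col ?S j)" for j
  proof (cases "j \<in> {1..N}")
    case True
    then show ?thesis using alt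
      by (intro alternating_line_even_gaps[OF _ col_grid_subset[OF minus_sites_subset]])
         (auto simp: lines_alternate_def)
  next
    case False
    then have "col ?S j = {}" by (auto simp: col_def minus_sites_def grid_def)
    then show ?thesis by (simp add: even_gaps_def)
  qed
  ultimately show ?thesis using even_constraint_iff_lines[OF minus_sites_subset] by blast
qed

lemma even_constraint_obtain_pi_valid:
  assumes S: "S \<subseteq> grid N" and even: "even_constraint N S"
  obtains H V where "H \<subseteq> hbonds N" "V \<subseteq> vbonds N" "pi_valid N H V" "minus_sites N H = S"
proof -
  have gaps: "even_gaps (row S i)" "even_gaps (col S j)" for i j
    using even even_constraint_iff_lines[OF S] by auto
  have "\<forall>i. \<exists>B. B \<subseteq> {0..N} \<and> alternating_line N (row S i) B"
    using even_gaps_ex_alternating_line[OF gaps(1) row_grid_subset[OF S]] by blast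
  from choice[OF this] obtain hb
    where hb: "\<forall>i. hb i \<subseteq> {0..N} \<and> alternating_line N (row S i) (hb i)" ..
  have "\<forall>j. \<exists>B. B \<subseteq> {0..N} \<and> alternating_line N (col S j) B"
    using even_gaps_ex_alternating_line[OF gaps(2) col_grid_subset[OF S]] by blast
  from choice[OF this] obtain vb
    where vb: "\<forall>j. vb j \<subseteq> {0..N} \<and> alternating_line N (col S j) (vb j)" ..
  define H where "H = {(i, k). i \<in> {1..N} \<and> k \<in> hb i}"
  define V where "V = {(k, j). j \<in> {1..N} \<and> k \<in> vb j}"
  have alt: "lines_alternate N S H V"
    using hb vb by (simp add: lines_alternate_def H_def V_def row_def col_def)
  have "H \<subseteq> hbonds N" "V \<subseteq> vbonds N"
    using hb vb by (auto simp: H_def V_def hbonds_def vbonds_def)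
  from that[OF this lines_alternate_pi_valid[OF alt] lines_alternate_minus_sites[OF alt S]]
  show ?thesis .
qed

lemma pi_valid_eqI:
  assumes HV: "H \<subseteq> hbonds N" "V \<subseteq> vbonds N" "pi_valid N H V"
    and HV': "H' \<subseteq> hbonds N" "V' \<subseteq> vbonds N" "pi_valid N H' V'"
    and same: "minus_sites N H = minus_sites N H'" "col H 0 = col H' 0" "row V 0 = row V' 0"
  shows "H = H'" "V = V'"
proof -
  have alt: "lines_alternate N (minus_sites N H) H V" "lines_alternate N (minus_sites N H) H' V'"
    using pi_valid_lines_alternate[OF HV(3)] pi_valid_lines_alternate[OF HV'(3)]
    unfolding same(1) .
  have "row H i = row H' i" if i: "i \<in> {1..N}" for i
  proof (rule alternating_line_unique)
    show "alternating_line N (row (minus_sites N H) i) (row H i)"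
      "alternating_line N (row (minus_sites N H) i) (row H' i)"
      using alt i by (auto simp: lines_alternate_def)
    show "row H i \<subseteq> {0..N}" "row H' i \<subseteq> {0..N}"
      using HV(1) HV'(1) by (auto simp: row_def hbonds_def)
    show "0 \<in> row H i \<longleftrightarrow> 0 \<in> row H' i"
      using same(2) by (auto simp: row_def col_def)
  qed
  then show "H = H'"
    using HV(1) HV'(1) unfolding row_def hbonds_def by blast
  have "col V j = col V' j" if j: "j \<in> {1..N}" for j
  proof (rule alternating_line_unique)
    show "alternating_line N (col (minus_sites N H) j) (col V j)"
      "alternating_line N (col (minus_sites N H) j) (col V' j)"
      using alt j by (auto simp: lines_alternate_def)
    show "col V j \<subseteq> {0..N}" "col V' j \<subseteq> {0..N}"
      using HV(2) HV'(2) by (auto simp: col_def vbonds_def)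
    show "0 \<in> col V j \<longleftrightarrow> 0 \<in> col V' j"
      using same(3) by (auto simp: row_def col_def)
  qed
  then show "V = V'"
    using HV(2) HV'(2) unfolding col_def vbonds_def by blast
qed

lemma finite_pi_configurations:
  "finite {(H, V). H \<subseteq> hbonds N \<and> V \<subseteq> vbonds N \<and> pi_valid N H V}"
  by (rule finite_subset[of _ "Pow (hbonds N) \<times> Pow (vbonds N)"])
     (auto simp: hbonds_def vbonds_def)

lemma Z_even_le_Z_pi: "Z_even N \<le> Z_pi N"
proof -
  let ?PI = "{(H, V). H \<subseteq> hbonds N \<and> V \<subseteq> vbonds N \<and> pi_valid N H V}"
  have "{S. S \<subseteq> grid N \<and> even_constraint N S} \<subseteq> (\<lambda>(H, V). minus_sites N H) ` ?PI"
  proof clarify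
    fix S assume "S \<subseteq> grid N" "even_constraint N S"
    then obtain H V where "H \<subseteq> hbonds N" "V \<subseteq> vbonds N" "pi_valid N H V" "minus_sites N H = S"
      by (rule even_constraint_obtain_pi_valid)
    then show "S \<in> (\<lambda>(H, V). minus_sites N H) ` ?PI"
      by (intro image_eqI[where x = "(H, V)"]) auto
  qed
  then have "Z_even N \<le> card ((\<lambda>(H, V). minus_sites N H) ` ?PI)"
    unfolding Z_even_def using finite_pi_configurations by (intro card_mono) auto
  also have "\<dots> \<le> Z_pi N"
    unfolding Z_pi_def by (rule card_image_le[OF finite_pi_configurations])
  finally show ?thesis .
qed

lemma Z_pi_le_Z_even: "Z_pi N \<le> 4 ^ N * Z_even N"
proof -
  let ?PI = "{(H, V). H \<subseteq> hbonds N \<and> V \<subseteq> vbonds N \<and> pi_valid N H V}"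
  let ?EV = "{S. S \<subseteq> grid N \<and> even_constraint N S}"
  \<comment> \<open>col H 0 and row V 0 are the states of the boundary bonds on the west and north edges.\<close>
  define F where "F = (\<lambda>(H, V). (minus_sites N H, col H 0, row V 0))"
  have "inj_on F ?PI"
  proof (rule inj_onI)
    fix x y assume x: "x \<in> ?PI" and y: "y \<in> ?PI" and eq: "F x = F y"
    obtain H V H' V' where xy: "x = (H, V)" "y = (H', V')" by fastforce
    show "x = y"
      using x y eq pi_valid_eqI[of H N V H' V'] unfolding xy by (simp add: F_def)
  qed
  moreover have "F ` ?PI \<subseteq> ?EV \<times> Pow {1..N} \<times> Pow {1..N}"
  proof
    fix z assume "z \<in> F ` ?PI"
    then obtain H V where "H \<subseteq> hbonds N" "V \<subseteq> vbonds N" "pi_valid N H V" "z = F (H, V)"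
      by auto
    then show "z \<in> ?EV \<times> Pow {1..N} \<times> Pow {1..N}"
      by (auto simp: F_def minus_sites_subset pi_valid_even_constraint
          row_def col_def hbonds_def vbonds_def)
  qed
  moreover have "finite ?EV"
    by (rule finite_subset[of _ "Pow (grid N)"]) (auto simp: grid_def)
  ultimately have "Z_pi N \<le> card (?EV \<times> Pow {1..N} \<times> Pow {1..N})"
    unfolding Z_pi_def by (intro card_inj_on_le) auto
  also have "\<dots> = 4 ^ N * Z_even N"
    by (simp add: Z_even_def card_cartesian_product card_Pow power_mult_distrib[symmetric])
  finally show ?thesis .
qed

lemma growth_seq_limits_eq:
  fixes Z Z' :: "nat \<Rightarrow> nat" and c :: nat
  assumes le: "\<And>N. Z N \<le> Z' N" and le': "\<And>N. Z' N \<le> c ^ N * Z N" and c: "0 < c"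
    and lim: "growth_seq Z \<longlonglongrightarrow> \<kappa>" and lim': "growth_seq Z' \<longlonglongrightarrow> \<kappa>'"
  shows "\<kappa> = \<kappa>'"
proof -
  have "growth_seq Z N \<le> growth_seq Z' N" for N
    unfolding growth_seq_def using le[of N] by (intro powr_mono2) auto
  with lim lim' have "\<kappa> \<le> \<kappa>'" by (intro LIMSEQ_le) auto
  have bound: "growth_seq Z' N \<le> c powr (1 / N) * growth_seq Z N" if N: "N \<ge> 1" for N
  proof -
    have "real (Z' N) \<le> real c ^ N * real (Z N)"
      using le'[of N] by (metis of_nat_le_iff of_nat_mult of_nat_power)
    then have "growth_seq Z' N \<le> (real c ^ N * real (Z N)) powr (1 / real (N ^ 2))"
      unfolding growth_seq_def by (intro powr_mono2) auto
    also have "\<dots> = (real c ^ N) powr (1 / real (N ^ 2)) * growth_seq Z N"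
      by (simp add: powr_mult growth_seq_def)
    also have "(real c ^ N) powr (1 / real (N ^ 2)) = c powr (1 / N)"
      using c N by (simp add: powr_realpow[symmetric] powr_powr power2_eq_square)
    finally show ?thesis .
  qed
  have "(\<lambda>N. c powr (1 / real N)) \<longlonglongrightarrow> 1"
    using c tendsto_powr[OF tendsto_const lim_const_over_n, of c 1] by simp
  from tendsto_mult[OF this lim]
  have "(\<lambda>N. c powr (1 / real N) * growth_seq Z N) \<longlonglongrightarrow> \<kappa>" by simp
  with lim' bound have "\<kappa>' \<le> \<kappa>" by (intro LIMSEQ_le) auto
  with \<open>\<kappa> \<le> \<kappa>'\<close> show ?thesis by simp
qed

theorem mainTheorem2:
  fixes kappa_even kappa_pi :: real
  assumes "growth_seq Z_even \<longlonglongrightarrow> kappa_even"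
      and "growth_seq Z_pi \<longlonglongrightarrow> kappa_pi"
  shows "kappa_even = kappa_pi"
  using growth_seq_limits_eq[OF Z_even_le_Z_pi Z_pi_le_Z_even _ assms] by simp

end
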